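(* Consider the two-stage robust problem $\min_{x\in\mathcal X}c_1x+\max_{u\in\mathcal U(x)}\min_{y\in\mathcal Y(x,u)}c_2y$ with decision-dependent uncertainty set $\mathcal U(x)=\{u\in\{0,1\}^{m_u}: Fu\le h,\ u\le x'\}$, where $x'\in\{0,1\}^{m_u}$ is a subvector of binary first-stage variables of $x$, and suppose the set $\mathcal U^0=\{u\in\{0,1\}^{m_u}: Fu\le h\}$ is downward closed (if $u^1\in\mathcal U^0$, $u^2\in\{0,1\}^{m_u}$ and $u^2\le u^1$ then $u^2\in\mathcal U^0$). Then this problem is equivalent to the decision-independent two-stage robust problem $\min_{x\in\mathcal X}c_1x+\max_{u\in\mathcal U^0}\min_{y\in\bar{\mathcal Y}(x,u)}c_2y$, where $\bar{\mathcal Y}(x,u)=\{y\in\mathbb Z^{m_y}_+\times\mathbb R^{n_y}_+: B_2y\ge d-B_1x-E(u\circ x')\}$; equivalently, with the recourse feasible set replaced by $\{(y,v)\in(\mathbb Z^{m_y}_+\times\mathbb R^{n_y}_+)\times\mathbb R^{m_u}_+: B_2y\ge d-B_1x-Ev,\ v\le x',\ v\le u,\ v\ge x'+u-\mathbf 1\}$.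
   Context: $\mathcal X=\{x\in\mathbb Z^{m_x}_+\times\mathbb R^{n_x}_+: Ax\ge b\}$ (containing the binary subvector $x'$), $\mathcal Y(x,u)=\{y\in\mathbb Z^{m_y}_+\times\mathbb R^{n_y}_+: B_2y\ge d-B_1x-Eu\}$. $a\circ b$ denotes the componentwise (Hadamard) product and $\mathbf 1$ the all-ones vector. The optimal value of an infeasible minimization (maximization) problem is $+\infty$ ($-\infty$). Two formulations are called equivalent if they have the same optimal value and any optimal first-stage solution of one is optimal for the other, and vice versa. *)

theory Defs
  imports Complex_Main "HOL-Library.Extended_Real"
begin

text \<open>Vectors are modelled as functions nat => real, with an explicit dimension;
  a vector of dimension n is zero outside the indices 0..<n.\<close>

definition dotp :: "nat \<Rightarrow> (nat \<Rightarrow> real) \<Rightarrow> (nat \<Rightarrow> real) \<Rightarrow> real" where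
  "dotp n c x = (\<Sum>j<n. c j * x j)"

definition matvec :: "nat \<Rightarrow> (nat \<Rightarrow> nat \<Rightarrow> real) \<Rightarrow> (nat \<Rightarrow> real) \<Rightarrow> nat \<Rightarrow> real" where
  "matvec n M x = (\<lambda>i. \<Sum>j<n. M i j * x j)"

definition mixed_orthant :: "nat \<Rightarrow> nat \<Rightarrow> (nat \<Rightarrow> real) set" where
  "mixed_orthant m n = {y. (\<forall>i<m. y i \<in> \<int>) \<and> (\<forall>i<m+n. 0 \<le> y i) \<and> (\<forall>i\<ge>m+n. y i = 0)}"

definition binvecs :: "nat \<Rightarrow> (nat \<Rightarrow> real) set" where
  "binvecs m = {u. (\<forall>i<m. u i \<in> {0,1}) \<and> (\<forall>i\<ge>m. u i = 0)}"

definition nonneg_vecs :: "nat \<Rightarrow> (nat \<Rightarrow> real) set" where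
  "nonneg_vecs m = {v. (\<forall>i<m. 0 \<le> v i) \<and> (\<forall>i\<ge>m. v i = 0)}"

definition Xset :: "nat \<Rightarrow> nat \<Rightarrow> nat \<Rightarrow> (nat \<Rightarrow> nat \<Rightarrow> real) \<Rightarrow> (nat \<Rightarrow> real) \<Rightarrow> (nat \<Rightarrow> real) set" where
  "Xset mx nx rA A b = {x \<in> mixed_orthant mx nx. \<forall>i<rA. matvec (mx+nx) A x i \<ge> b i}"

text \<open>The binary subvector x' of x, selected by the index map sel: x'_i = x_(sel i).\<close>
definition subvec :: "nat \<Rightarrow> (nat \<Rightarrow> nat) \<Rightarrow> (nat \<Rightarrow> real) \<Rightarrow> nat \<Rightarrow> real" where
  "subvec mu sel x = (\<lambda>i. if i < mu then x (sel i) else 0)"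

definition hadamard :: "(nat \<Rightarrow> real) \<Rightarrow> (nat \<Rightarrow> real) \<Rightarrow> nat \<Rightarrow> real" where
  "hadamard a b = (\<lambda>i. a i * b i)"

text \<open>Recourse set {y in Z^my_+ x R^ny_+ : B2 y >= d - B1 x - E w} (B-matrices have rB rows).
  Y(x,u) is recourse_set ... x u, and Ybar(x,u) is recourse_set ... x (u o x').\<close>
definition recourse_set ::
  "nat \<Rightarrow> nat \<Rightarrow> nat \<Rightarrow> nat \<Rightarrow> nat \<Rightarrow> nat \<Rightarrow>
   (nat \<Rightarrow> nat \<Rightarrow> real) \<Rightarrow> (nat \<Rightarrow> nat \<Rightarrow> real) \<Rightarrow> (nat \<Rightarrow> nat \<Rightarrow> real) \<Rightarrow> (nat \<Rightarrow> real) \<Rightarrow>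
   (nat \<Rightarrow> real) \<Rightarrow> (nat \<Rightarrow> real) \<Rightarrow> (nat \<Rightarrow> real) set" where
  "recourse_set mx nx my ny mu rB B1 B2 E d x w =
     {y \<in> mixed_orthant my ny.
        \<forall>i<rB. matvec (my+ny) B2 y i \<ge> d i - matvec (mx+nx) B1 x i - matvec mu E w i}"

definition recourse_set_lin ::
  "nat \<Rightarrow> nat \<Rightarrow> nat \<Rightarrow> nat \<Rightarrow> nat \<Rightarrow> nat \<Rightarrow> (nat \<Rightarrow> nat) \<Rightarrow>
   (nat \<Rightarrow> nat \<Rightarrow> real) \<Rightarrow> (nat \<Rightarrow> nat \<Rightarrow> real) \<Rightarrow> (nat \<Rightarrow> nat \<Rightarrow> real) \<Rightarrow> (nat \<Rightarrow> real) \<Rightarrow>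
   (nat \<Rightarrow> real) \<Rightarrow> (nat \<Rightarrow> real) \<Rightarrow> ((nat \<Rightarrow> real) \<times> (nat \<Rightarrow> real)) set" where
  "recourse_set_lin mx nx my ny mu rB sel B1 B2 E d x u =
     {(y, v). y \<in> mixed_orthant my ny \<and> v \<in> nonneg_vecs mu \<and>
        (\<forall>i<rB. matvec (my+ny) B2 y i \<ge> d i - matvec (mx+nx) B1 x i - matvec mu E v i) \<and>
        (\<forall>i<mu. v i \<le> subvec mu sel x i \<and> v i \<le> u i \<and> v i \<ge> subvec mu sel x i + u i - 1)}"

definition U0set :: "nat \<Rightarrow> nat \<Rightarrow> (nat \<Rightarrow> nat \<Rightarrow> real) \<Rightarrow> (nat \<Rightarrow> real) \<Rightarrow> (nat \<Rightarrow> real) set" where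
  "U0set mu rF F h = {u \<in> binvecs mu. \<forall>i<rF. matvec mu F u i \<le> h i}"

definition Uset :: "nat \<Rightarrow> nat \<Rightarrow> (nat \<Rightarrow> nat \<Rightarrow> real) \<Rightarrow> (nat \<Rightarrow> real) \<Rightarrow> (nat \<Rightarrow> nat) \<Rightarrow>
    (nat \<Rightarrow> real) \<Rightarrow> (nat \<Rightarrow> real) set" where
  "Uset mu rF F h sel x = {u \<in> U0set mu rF F h. \<forall>i<mu. u i \<le> subvec mu sel x i}"

definition downward_closed :: "nat \<Rightarrow> (nat \<Rightarrow> real) set \<Rightarrow> bool" where
  "downward_closed m S \<longleftrightarrow>
     (\<forall>u1\<in>S. \<forall>u2\<in>binvecs m. (\<forall>i<m. u2 i \<le> u1 i) \<longrightarrow> u2 \<in> S)"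

text \<open>Optimal values are taken in the extended reals: Inf {} = +infinity, Sup {} = -infinity,
  matching the convention for infeasible min/max problems.\<close>
definition opt_value :: "('a \<Rightarrow> ereal) \<Rightarrow> 'a set \<Rightarrow> ereal" where
  "opt_value f X = (INF x\<in>X. f x)"

definition is_optimal :: "('a \<Rightarrow> ereal) \<Rightarrow> 'a set \<Rightarrow> 'a \<Rightarrow> bool" where
  "is_optimal f X x \<longleftrightarrow> x \<in> X \<and> f x = opt_value f X"

definition equivalent_formulations :: "('a \<Rightarrow> ereal) \<Rightarrow> ('a \<Rightarrow> ereal) \<Rightarrow> 'a set \<Rightarrow> bool" where
  "equivalent_formulations f g X \<longleftrightarrow>
     opt_value f X = opt_value g X \<and> (\<forall>x. is_optimal f X x \<longleftrightarrow> is_optimal g X x)"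

end

theory Submission
  imports Defs
begin

text \<open>For a binary first-stage vector \<open>x'\<close>, the map \<open>u \<mapsto> u \<circ> x'\<close> fixes every
  \<open>u \<in> U(x)\<close> and, \<open>U\<^sup>0\<close> being downward closed, sends \<open>U\<^sup>0\<close> into \<open>U(x)\<close>; hence it maps
  \<open>U\<^sup>0\<close> onto \<open>U(x)\<close>, and the inner max over \<open>U(x)\<close> equals the max over \<open>U\<^sup>0\<close> of the
  recourse value at \<open>u \<circ> x'\<close>. For binary \<open>u\<close> and \<open>x'\<close> the McCormick inequalities
  \<open>0 \<le> v \<le> x'\<close>, \<open>v \<le> u\<close>, \<open>v \<ge> x' + u - 1\<close> force \<open>v = u \<circ> x'\<close>, so the linearized recourse
  set is just \<open>Ybar(x,u)\<close> paired with this \<open>v\<close>. In both cases the objectives agree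
  pointwise on \<open>X\<close>, which gives equivalence.\<close>

lemma equivalent_formulations_cong:
  assumes "\<And>x. x \<in> X \<Longrightarrow> f x = g x"
  shows "equivalent_formulations f g X"
proof -
  have "opt_value f X = opt_value g X"
    unfolding opt_value_def using assms by (metis image_cong)
  then show ?thesis
    unfolding equivalent_formulations_def is_optimal_def using assms by auto
qed

lemma binvecs_range:
  assumes "u \<in> binvecs m"
  shows "u i \<in> {0, 1}"
  using assms by (cases "i < m") (auto simp: binvecs_def)

lemma subvec_mem_binvecs:
  assumes "\<forall>i<m. x (sel i) \<in> {0, 1}"
  shows "subvec m sel x \<in> binvecs m"
  using assms by (simp add: subvec_def binvecs_def)

lemma hadamard_mem_binvecs:
  assumes "u \<in> binvecs m" and "w \<in> binvecs m"
  shows "hadamard u w \<in> binvecs m"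
proof -
  have "u i * w i \<in> {0, 1}" for i
    using binvecs_range[OF assms(1), of i] binvecs_range[OF assms(2), of i] by auto
  then show ?thesis
    using assms by (simp add: binvecs_def hadamard_def)
qed

lemma hadamard_binvecs_le:
  assumes "u \<in> binvecs m" and "w \<in> binvecs m"
  shows "hadamard u w i \<le> u i" and "hadamard u w i \<le> w i"
  using binvecs_range[OF assms(1), of i] binvecs_range[OF assms(2), of i]
  by (auto simp: hadamard_def)

lemma hadamard_eq_left_if_le:
  assumes "u \<in> binvecs m" and "w \<in> binvecs m" and "\<forall>i<m. u i \<le> w i"
  shows "hadamard u w = u"
proof
  fix i
  have "u i \<le> w i"
    using assms by (cases "i < m") (auto simp: binvecs_def)
  then show "hadamard u w i = u i"
    using binvecs_range[OF assms(1), of i] binvecs_range[OF assms(2), of i]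
    by (auto simp: hadamard_def)
qed

lemma hadamard_image_U0set:
  assumes x_binary: "\<forall>i<mu. x (sel i) \<in> {0, 1}"
    and down: "downward_closed mu (U0set mu rF F h)"
  shows "(\<lambda>u. hadamard u (subvec mu sel x)) ` U0set mu rF F h = Uset mu rF F h sel x"
proof
  have x'_bin: "subvec mu sel x \<in> binvecs mu"
    using x_binary by (rule subvec_mem_binvecs)
  show "(\<lambda>u. hadamard u (subvec mu sel x)) ` U0set mu rF F h \<subseteq> Uset mu rF F h sel x"
  proof clarify
    fix u assume u: "u \<in> U0set mu rF F h"
    then have u_bin: "u \<in> binvecs mu"
      by (simp add: U0set_def)
    have "hadamard u (subvec mu sel x) \<in> U0set mu rF F h"
      using down u hadamard_mem_binvecs[OF u_bin x'_bin] hadamard_binvecs_le(1)[OF u_bin x'_bin]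
      unfolding downward_closed_def by blast
    then show "hadamard u (subvec mu sel x) \<in> Uset mu rF F h sel x"
      using hadamard_binvecs_le(2)[OF u_bin x'_bin] by (simp add: Uset_def)
  qed
  show "Uset mu rF F h sel x \<subseteq> (\<lambda>u. hadamard u (subvec mu sel x)) ` U0set mu rF F h"
  proof
    fix u assume "u \<in> Uset mu rF F h sel x"
    then have "u \<in> U0set mu rF F h" and "u = hadamard u (subvec mu sel x)"
      using hadamard_eq_left_if_le[OF _ x'_bin] by (auto simp: Uset_def U0set_def)
    then show "u \<in> (\<lambda>u. hadamard u (subvec mu sel x)) ` U0set mu rF F h"
      by blast
  qed
qed

lemma mccormick_binary_iff:
  fixes a b v :: real
  assumes "a \<in> {0, 1}" and "b \<in> {0, 1}"
  shows "(0 \<le> v \<and> v \<le> a \<and> v \<le> b \<and> a + b - 1 \<le> v) \<longleftrightarrow> v = a * b"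
  using assms by auto

lemma mccormick_vecs_iff:
  assumes "u \<in> binvecs m" and "w \<in> binvecs m"
  shows "(v \<in> nonneg_vecs m \<and> (\<forall>i<m. v i \<le> w i \<and> v i \<le> u i \<and> w i + u i - 1 \<le> v i))
    \<longleftrightarrow> v = hadamard u w"
proof -
  have inside: "(0 \<le> v i \<and> v i \<le> w i \<and> v i \<le> u i \<and> w i + u i - 1 \<le> v i) \<longleftrightarrow> v i = hadamard u w i"
    for i
    using mccormick_binary_iff[where v = "v i", OF binvecs_range[OF assms(2)] binvecs_range[OF assms(1)]]
    by (simp add: hadamard_def mult.commute)
  have outside: "hadamard u w i = 0" if "i \<ge> m" for i
    using assms that by (simp add: binvecs_def hadamard_def)
  have "v = hadamard u w \<longleftrightarrow> (\<forall>i<m. v i = hadamard u w i) \<and> (\<forall>i\<ge>m. v i = hadamard u w i)"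
    by (metis leI ext)
  with inside outside show ?thesis
    unfolding nonneg_vecs_def mem_Collect_eq by metis
qed

lemma recourse_set_lin_eq:
  assumes "\<forall>i<mu. x (sel i) \<in> {0, 1}" and "u \<in> binvecs mu"
  shows "recourse_set_lin mx nx my ny mu rB sel B1 B2 E d x u
    = (\<lambda>y. (y, hadamard u (subvec mu sel x)))
        ` recourse_set mx nx my ny mu rB B1 B2 E d x (hadamard u (subvec mu sel x))"
proof -
  have "(y, v) \<in> recourse_set_lin mx nx my ny mu rB sel B1 B2 E d x u \<longleftrightarrow>
      y \<in> recourse_set mx nx my ny mu rB B1 B2 E d x v \<and> v = hadamard u (subvec mu sel x)" for y v
    using mccormick_vecs_iff[OF assms(2) subvec_mem_binvecs[where x=x and sel=sel, OF assms(1)], of v]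
    unfolding recourse_set_lin_def recourse_set_def by blast
  then show ?thesis
    by auto
qed

theorem proposition3:
  fixes mx nx my ny mu rA rB rF :: nat
    and A B1 B2 E F :: "nat \<Rightarrow> nat \<Rightarrow> real"
    and b d h c1 c2 :: "nat \<Rightarrow> real"
    and sel :: "nat \<Rightarrow> nat"
  assumes sel_range: "\<forall>i<mu. sel i < mx + nx"
    and sel_inj: "inj_on sel {..<mu}"
    and sel_binary: "\<forall>x\<in>Xset mx nx rA A b. \<forall>i<mu. x (sel i) \<in> {0, 1}"
    and down: "downward_closed mu (U0set mu rF F h)"
  shows
    "equivalent_formulations
       (\<lambda>x. ereal (dotp (mx+nx) c1 x) +
          (SUP u\<in>Uset mu rF F h sel x.
             INF y\<in>recourse_set mx nx my ny mu rB B1 B2 E d x u. ereal (dotp (my+ny) c2 y)))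
       (\<lambda>x. ereal (dotp (mx+nx) c1 x) +
          (SUP u\<in>U0set mu rF F h.
             INF y\<in>recourse_set mx nx my ny mu rB B1 B2 E d x (hadamard u (subvec mu sel x)).
               ereal (dotp (my+ny) c2 y)))
       (Xset mx nx rA A b)
   \<and> equivalent_formulations
       (\<lambda>x. ereal (dotp (mx+nx) c1 x) +
          (SUP u\<in>Uset mu rF F h sel x.
             INF y\<in>recourse_set mx nx my ny mu rB B1 B2 E d x u. ereal (dotp (my+ny) c2 y)))
       (\<lambda>x. ereal (dotp (mx+nx) c1 x) +
          (SUP u\<in>U0set mu rF F h.
             INF yv\<in>recourse_set_lin mx nx my ny mu rB sel B1 B2 E d x u.
               ereal (dotp (my+ny) c2 (fst yv))))
       (Xset mx nx rA A b)"
proof -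
  define Q where "Q x w = (INF y\<in>recourse_set mx nx my ny mu rB B1 B2 E d x w. ereal (dotp (my+ny) c2 y))"
    for x w
  have max_U_eq: "(SUP u\<in>Uset mu rF F h sel x. Q x u)
      = (SUP u\<in>U0set mu rF F h. Q x (hadamard u (subvec mu sel x)))"
    if "x \<in> Xset mx nx rA A b" for x
    using hadamard_image_U0set[where x=x and sel=sel, OF bspec[OF sel_binary that] down]
    by (metis image_image)
  have min_lin_eq: "(INF yv\<in>recourse_set_lin mx nx my ny mu rB sel B1 B2 E d x u.
        ereal (dotp (my+ny) c2 (fst yv))) = Q x (hadamard u (subvec mu sel x))"
    if "x \<in> Xset mx nx rA A b" and "u \<in> U0set mu rF F h" for x u
    using that sel_binary by (simp add: Q_def recourse_set_lin_eq U0set_def image_image)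
  show ?thesis
    using max_U_eq min_lin_eq
    by (auto simp: Q_def intro!: equivalent_formulations_cong SUP_cong)
qed

end
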